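(* Every topological manifold $X$ of positive dimension admits infinitely many pairwise nonisomorphic nontrivial topological quandle structures.
   Context: A topological quandle structure on a topological space $X$ is a continuous map $f:X\times X\to X$ such that for every $y\in X$ the map $R_y:X\to X$, $x\mapsto f(x,y)$, is a homeomorphism, $f(f(x,y),z)=f(f(x,z),f(y,z))$ for all $x,y,z\in X$, and $f(x,x)=x$ for all $x\in X$. The structure is trivial if $f(x,y)=x$ for all $x,y$, and nontrivial otherwise. Two such structures $f_1,f_2$ on $X$ are isomorphic if there is a homeomorphism $\varphi:X\to X$ with $\varphi(f_1(x,y))=f_2(\varphi(x),\varphi(y))$ for all $x,y\in X$. *)

theory Defs
  imports "HOL-Analysis.Analysis"
begin

definition topological_manifold :: "'a topology \<Rightarrow> nat \<Rightarrow> bool" where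
  "topological_manifold X n \<longleftrightarrow>
     Hausdorff_space X \<and> second_countable X \<and>
     (\<forall>x\<in>topspace X. \<exists>U V. openin X U \<and> x \<in> U \<and> openin (Euclidean_space n) V \<and>
        (subtopology X U) homeomorphic_space (subtopology (Euclidean_space n) V))"

definition topological_quandle :: "'a topology \<Rightarrow> ('a \<Rightarrow> 'a \<Rightarrow> 'a) \<Rightarrow> bool" where
  "topological_quandle X f \<longleftrightarrow>
     continuous_map (prod_topology X X) X (\<lambda>(x, y). f x y) \<and>
     (\<forall>y\<in>topspace X. homeomorphic_map X X (\<lambda>x. f x y)) \<and>
     (\<forall>x\<in>topspace X. \<forall>y\<in>topspace X. \<forall>z\<in>topspace X. f (f x y) z = f (f x z) (f y z)) \<and>
     (\<forall>x\<in>topspace X. f x x = x)"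

definition trivial_quandle :: "'a topology \<Rightarrow> ('a \<Rightarrow> 'a \<Rightarrow> 'a) \<Rightarrow> bool" where
  "trivial_quandle X f \<longleftrightarrow> (\<forall>x\<in>topspace X. \<forall>y\<in>topspace X. f x y = x)"

definition quandle_isomorphic :: "'a topology \<Rightarrow> ('a \<Rightarrow> 'a \<Rightarrow> 'a) \<Rightarrow> ('a \<Rightarrow> 'a \<Rightarrow> 'a) \<Rightarrow> bool" where
  "quandle_isomorphic X f1 f2 \<longleftrightarrow>
     (\<exists>\<phi>. homeomorphic_map X X \<phi> \<and>
        (\<forall>x\<in>topspace X. \<forall>y\<in>topspace X. \<phi> (f1 x y) = f2 (\<phi> x) (\<phi> y)))"

end

(* Take a chart of X whose image contains a large cube, and in it the k slabs |v_0 - 2j| < 1,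
   j = 1..k.  For a real a, let R_a move the coordinate v_0 inside slab j by a hyperbolic shift
   u |-> (u + s)/(1 + u s) of (-1, 1), with strength s proportional to a tent function of a - j
   and damped by a bump in the remaining coordinates; outside the chart R_a is the identity.
   The R_a commute.  A continuous control c : X -> [0, k], supported near v_0 = -2 where every
   R_a is the identity, is invariant under all R_a and satisfies R_(c x) x = x, so
   x * y = R_(c y) x is a topological quandle.  Its right translations have exactly k + 1
   distinct fixed-point sets, namely X and the complements of the k slab regions, and this
   number is an isomorphism invariant. *)

theory Submission
  imports Defs
begin

section \<open>Fixed-point sets of right translations\<close>

definition right_fixed_set :: "'a topology \<Rightarrow> ('a \<Rightarrow> 'a \<Rightarrow> 'a) \<Rightarrow> 'a \<Rightarrow> 'a set" where
  "right_fixed_set X f y = {x \<in> topspace X. f x y = x}"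

definition right_fixed_sets :: "'a topology \<Rightarrow> ('a \<Rightarrow> 'a \<Rightarrow> 'a) \<Rightarrow> 'a set set" where
  "right_fixed_sets X f = right_fixed_set X f ` topspace X"

lemma topological_quandle_in_topspace:
  assumes "topological_quandle X f" "x \<in> topspace X" "y \<in> topspace X"
  shows "f x y \<in> topspace X"
proof -
  have "homeomorphic_map X X (\<lambda>x. f x y)"
    using assms unfolding topological_quandle_def by blast
  then show ?thesis
    using assms(2) homeomorphic_imp_surjective_map by blast
qed

lemma image_right_fixed_set_isomorphic:
  assumes f: "topological_quandle X f"
    and \<phi>: "homeomorphic_map X X \<phi>"
    and hom: "\<forall>x\<in>topspace X. \<forall>y\<in>topspace X. \<phi> (f x y) = g (\<phi> x) (\<phi> y)"
    and y: "y \<in> topspace X"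
  shows "\<phi> ` right_fixed_set X f y = right_fixed_set X g (\<phi> y)"
proof -
  have surj: "\<phi> ` topspace X = topspace X"
    using \<phi> homeomorphic_imp_surjective_map by blast
  have inj: "inj_on \<phi> (topspace X)"
    using \<phi> homeomorphic_imp_injective_map by blast
  have fixed_iff: "g (\<phi> x) (\<phi> y) = \<phi> x \<longleftrightarrow> f x y = x" if x: "x \<in> topspace X" for x
  proof -
    have "g (\<phi> x) (\<phi> y) = \<phi> x \<longleftrightarrow> \<phi> (f x y) = \<phi> x"
      using hom x y by simp
    also have "\<dots> \<longleftrightarrow> f x y = x"
      using inj_on_eq_iff[OF inj topological_quandle_in_topspace[OF f x y] x] .
    finally show ?thesis .
  qed
  show ?thesis
  proof (intro equalityI subsetI)
    fix x' assume "x' \<in> \<phi> ` right_fixed_set X f y"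
    then show "x' \<in> right_fixed_set X g (\<phi> y)"
      unfolding right_fixed_set_def using fixed_iff surj by blast
  next
    fix x' assume x': "x' \<in> right_fixed_set X g (\<phi> y)"
    then obtain x where "x \<in> topspace X" "x' = \<phi> x"
      unfolding right_fixed_set_def using surj by blast
    then show "x' \<in> \<phi> ` right_fixed_set X f y"
      using x' fixed_iff unfolding right_fixed_set_def by blast
  qed
qed

lemma card_right_fixed_sets_isomorphic:
  assumes f: "topological_quandle X f" and iso: "quandle_isomorphic X f g"
  shows "card (right_fixed_sets X g) = card (right_fixed_sets X f)"
proof -
  obtain \<phi> where \<phi>: "homeomorphic_map X X \<phi>"
    and hom: "\<forall>x\<in>topspace X. \<forall>y\<in>topspace X. \<phi> (f x y) = g (\<phi> x) (\<phi> y)"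
    using iso unfolding quandle_isomorphic_def by blast
  note fixed = image_right_fixed_set_isomorphic[OF f \<phi> hom]
  have "right_fixed_sets X g = right_fixed_set X g ` \<phi> ` topspace X"
    unfolding right_fixed_sets_def homeomorphic_imp_surjective_map[OF \<phi>] ..
  also have "\<dots> = (\<lambda>y. \<phi> ` right_fixed_set X f y) ` topspace X"
    unfolding image_comp o_def using fixed by (intro image_cong) auto
  finally have eq: "right_fixed_sets X g = image \<phi> ` right_fixed_sets X f"
    unfolding right_fixed_sets_def by (simp add: image_comp o_def)
  have "inj_on (image \<phi>) (Pow (topspace X))"
    by (rule inj_on_image_Pow[OF homeomorphic_imp_injective_map[OF \<phi>]])
  moreover have "right_fixed_sets X f \<subseteq> Pow (topspace X)"
    unfolding right_fixed_sets_def right_fixed_set_def by auto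
  ultimately show ?thesis
    unfolding eq by (simp add: card_image inj_on_subset)
qed

lemma card_right_fixed_sets_trivial:
  assumes "trivial_quandle X f"
  shows "card (right_fixed_sets X f) \<le> 1"
proof -
  have "right_fixed_sets X f \<subseteq> {topspace X}"
    using assms unfolding right_fixed_sets_def right_fixed_set_def trivial_quandle_def by auto
  then have "card (right_fixed_sets X f) \<le> card {topspace X}"
    by (rule card_mono[rotated]) simp
  then show ?thesis
    by simp
qed

lemma infinitely_many_nonisomorphic_quandles:
  assumes "\<And>k. 1 \<le> k \<Longrightarrow> \<exists>f. topological_quandle X f \<and> card (right_fixed_sets X f) = Suc k"
  shows "\<exists>Q. infinite Q \<and>
           (\<forall>f\<in>Q. topological_quandle X f \<and> \<not> trivial_quandle X f) \<and>
           (\<forall>f\<in>Q. \<forall>g\<in>Q. f \<noteq> g \<longrightarrow> \<not> quandle_isomorphic X f g)"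
proof -
  have "\<forall>m. \<exists>f. topological_quandle X f \<and> card (right_fixed_sets X f) = m + 2"
    using assms[of "Suc _"] by simp
  then obtain G where G: "\<And>m. topological_quandle X (G m)"
    and card_G: "\<And>m. card (right_fixed_sets X (G m)) = m + 2"
    by metis
  have "inj G"
    by (rule injI) (metis card_G add_right_cancel)
  then have "infinite (range G)"
    using finite_imageD by blast
  moreover have "\<not> trivial_quandle X (G m)" for m
    using card_G[of m] card_right_fixed_sets_trivial[of X "G m"] by linarith
  moreover have "\<not> quandle_isomorphic X (G a) (G b)" if "G a \<noteq> G b" for a b
  proof
    assume "quandle_isomorphic X (G a) (G b)"
    then have "b + 2 = a + 2"
      using card_right_fixed_sets_isomorphic[OF G] card_G by metis
    then show False
      using that by simp
  qed
  ultimately show ?thesis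
    using G by blast
qed

section \<open>Quandles from commuting families of homeomorphisms\<close>

lemma topological_quandle_commuting_family:
  fixes R :: "'b \<Rightarrow> 'a \<Rightarrow> 'a" and p :: "'a \<Rightarrow> 'b"
  assumes "continuous_map (prod_topology X X) X (\<lambda>(x, y). R (p y) x)"
    and "\<And>y. y \<in> topspace X \<Longrightarrow> homeomorphic_map X X (R (p y))"
    and commute: "\<And>a b x. x \<in> topspace X \<Longrightarrow> R a (R b x) = R b (R a x)"
    and invariant: "\<And>a x. x \<in> topspace X \<Longrightarrow> p (R a x) = p x"
    and "\<And>x. x \<in> topspace X \<Longrightarrow> R (p x) x = x"
  shows "topological_quandle X (\<lambda>x y. R (p y) x)"
proof -
  have "R (p z) (R (p y) x) = R (p (R (p z) y)) (R (p z) x)"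
    if "x \<in> topspace X" "y \<in> topspace X" for x y z
    using that by (simp add: commute invariant)
  then show ?thesis
    unfolding topological_quandle_def using assms(1,2,5) by blast
qed

section \<open>Hyperbolic shifts of the interval\<close>

(* hyperbolic_shift s u = tanh (artanh u + artanh s): a commuting family of homeomorphisms
   of (-1, 1). *)
definition hyperbolic_shift :: "real \<Rightarrow> real \<Rightarrow> real" where
  "hyperbolic_shift s u = (u + s) / (1 + u * s)"

lemma hyperbolic_shift_denominator_pos:
  fixes u s :: real
  assumes "\<bar>u\<bar> \<le> 1" "\<bar>s\<bar> < 1"
  shows "0 < 1 + u * s"
proof -
  have "\<bar>u * s\<bar> \<le> \<bar>s\<bar>"
    using assms(1) by (simp add: abs_mult mult_left_le_one_le)
  then show ?thesis
    using assms(2) by linarith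
qed

lemma abs_hyperbolic_shift_less:
  assumes u: "\<bar>u\<bar> < 1" and s: "\<bar>s\<bar> < 1"
  shows "\<bar>hyperbolic_shift s u\<bar> < 1"
proof -
  have d: "0 < 1 + u * s"
    using hyperbolic_shift_denominator_pos u s by simp
  have "0 < (1 - u) * (1 - s)" "0 < (1 + u) * (1 + s)"
    using u s by (auto intro!: mult_pos_pos)
  then have "u + s < 1 + u * s" "- (u + s) < 1 + u * s"
    by (simp_all add: algebra_simps)
  then have "\<bar>u + s\<bar> < 1 + u * s"
    by (simp only: abs_less_iff)
  then show ?thesis
    unfolding hyperbolic_shift_def abs_divide abs_of_pos[OF d] using d
    by (simp only: pos_divide_less_eq mult_1)
qed

lemma hyperbolic_shift_shift:
  assumes "1 + u * t \<noteq> 0"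
  shows "hyperbolic_shift s (hyperbolic_shift t u) =
    (u + s + t + u * s * t) / (1 + u * s + u * t + s * t)"
proof -
  have "hyperbolic_shift t u + s = (u + s + t + u * s * t) / (1 + u * t)"
    "1 + hyperbolic_shift t u * s = (1 + u * s + u * t + s * t) / (1 + u * t)"
    unfolding hyperbolic_shift_def using assms by (simp_all add: field_simps)
  then show ?thesis
    using assms by (simp add: hyperbolic_shift_def)
qed

lemma hyperbolic_shift_commute:
  assumes "\<bar>u\<bar> \<le> 1" "\<bar>s\<bar> < 1" "\<bar>t\<bar> < 1"
  shows "hyperbolic_shift s (hyperbolic_shift t u) = hyperbolic_shift t (hyperbolic_shift s u)"
proof -
  have "0 < 1 + u * s" "0 < 1 + u * t"
    using hyperbolic_shift_denominator_pos assms by simp_all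
  then show ?thesis
    by (simp add: hyperbolic_shift_shift ac_simps)
qed

lemma hyperbolic_shift_inverse:
  assumes "\<bar>u\<bar> \<le> 1" "\<bar>s\<bar> < 1"
  shows "hyperbolic_shift (- s) (hyperbolic_shift s u) = u"
proof -
  have "0 < 1 + u * s"
    using hyperbolic_shift_denominator_pos assms by simp
  then have "hyperbolic_shift (- s) (hyperbolic_shift s u) = u * (1 - s * s) / (1 - s * s)"
    by (simp add: hyperbolic_shift_shift algebra_simps)
  moreover have "0 < 1 - s * s"
    using assms(2) by (simp add: abs_square_less_1 flip: power2_eq_square)
  ultimately show ?thesis
    by simp
qed

lemma hyperbolic_shift_eq_self_iff:
  assumes u: "\<bar>u\<bar> < 1" and s: "\<bar>s\<bar> < 1"
  shows "hyperbolic_shift s u = u \<longleftrightarrow> s = 0"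
proof -
  have "0 < 1 + u * s"
    using hyperbolic_shift_denominator_pos u s by simp
  then have "hyperbolic_shift s u = u \<longleftrightarrow> s * (1 - u * u) = 0"
    unfolding hyperbolic_shift_def by (simp add: field_simps)
  moreover have "0 < 1 - u * u"
    using u by (simp add: abs_square_less_1 flip: power2_eq_square)
  ultimately show ?thesis
    by simp
qed

definition clip_half :: "real \<Rightarrow> real" where
  "clip_half t = max (- 1/2) (min (1/2) t)"

definition clip_one :: "real \<Rightarrow> real" where
  "clip_one u = max (- 1) (min 1 u)"

(* For |u| \<le> 1 this is hyperbolic_shift (clip_half t) u - u, and it vanishes for |u| \<ge> 1;
   the clipping makes it continuous on the whole plane. *)
definition shift_displacement :: "real \<Rightarrow> real \<Rightarrow> real" where
  "shift_displacement t u = clip_half t * max 0 (1 - u\<^sup>2) / (1 + clip_one u * clip_half t)"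

lemma abs_clip_half_le: "\<bar>clip_half t\<bar> \<le> 1/2"
  unfolding clip_half_def by auto

lemma abs_clip_half_less: "\<bar>clip_half t\<bar> < 1"
  using abs_clip_half_le[of t] by simp

lemma clip_half_minus: "clip_half (- t) = - clip_half t"
  unfolding clip_half_def by auto

lemma clip_half_eq: "\<bar>t\<bar> \<le> 1/2 \<Longrightarrow> clip_half t = t"
  unfolding clip_half_def by auto

lemma shift_displacement_0 [simp]: "shift_displacement 0 u = 0"
  unfolding shift_displacement_def clip_half_def by simp

lemma shift_displacement_outside:
  assumes "1 \<le> \<bar>u\<bar>"
  shows "shift_displacement t u = 0"
proof -
  have "1 \<le> u\<^sup>2"
    using assms by (metis abs_le_square_iff abs_one power_one)
  then show ?thesis
    unfolding shift_displacement_def by simp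
qed

lemma shift_displacement_inside:
  assumes u: "\<bar>u\<bar> \<le> 1"
  shows "u + shift_displacement t u = hyperbolic_shift (clip_half t) u"
proof -
  have "u\<^sup>2 \<le> 1"
    using u by (metis abs_le_square_iff abs_one power_one)
  then have "shift_displacement t u = clip_half t * (1 - u * u) / (1 + u * clip_half t)"
    using u unfolding shift_displacement_def clip_one_def by (simp add: power2_eq_square)
  moreover have "0 < 1 + u * clip_half t"
    using hyperbolic_shift_denominator_pos[OF u] abs_clip_half_le[of t] by simp
  ultimately show ?thesis
    unfolding hyperbolic_shift_def by (simp add: field_simps)
qed

lemma continuous_map_shift_displacement [continuous_intros]:
  assumes "continuous_map Z euclideanreal a" "continuous_map Z euclideanreal b"
  shows "continuous_map Z euclideanreal (\<lambda>z. shift_displacement (a z) (b z))"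
proof -
  have clips: "continuous_map Z euclideanreal (\<lambda>z. clip_half (a z))"
    "continuous_map Z euclideanreal (\<lambda>z. clip_one (b z))"
    unfolding clip_half_def clip_one_def by (intro continuous_intros assms; simp)+
  have "\<bar>clip_one (b z)\<bar> \<le> 1" for z
    unfolding clip_one_def by auto
  then have "0 < 1 + clip_one (b z) * clip_half (a z)" for z
    using abs_clip_half_less by (rule hyperbolic_shift_denominator_pos)
  then have "1 + clip_one (b z) * clip_half (a z) \<noteq> 0" for z
    by (metis less_irrefl)
  then show ?thesis
    unfolding shift_displacement_def
    by (intro continuous_map_real_divide continuous_intros clips assms) auto
qed

section \<open>The local model in Euclidean space\<close>

definition tent :: "nat \<Rightarrow> real \<Rightarrow> real" where
  "tent j a = max 0 (1/2 - \<bar>a - real j\<bar>)"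

definition transverse_bump :: "nat \<Rightarrow> (nat \<Rightarrow> real) \<Rightarrow> real" where
  "transverse_bump n v = (\<Prod>i\<in>{1..<n}. max 0 (1 - \<bar>v i\<bar>))"

definition model_move :: "nat \<Rightarrow> nat \<Rightarrow> real \<Rightarrow> real \<Rightarrow> (nat \<Rightarrow> real) \<Rightarrow> (nat \<Rightarrow> real)" where
  "model_move n k e a v = v(0 := v 0 +
     (\<Sum>j\<in>{1..k}. shift_displacement (e * tent j a * transverse_bump n v) (v 0 - 2 * real j)))"

definition model_control :: "nat \<Rightarrow> nat \<Rightarrow> (nat \<Rightarrow> real) \<Rightarrow> real" where
  "model_control n k v = real k * max 0 (1 - \<bar>v 0 + 2\<bar>) * transverse_bump n v"

lemma tent_bounds: "0 \<le> tent j a" "tent j a \<le> 1/2"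
  unfolding tent_def by (auto simp: max_def)

lemma tent_0: "1 \<le> j \<Longrightarrow> tent j 0 = 0"
  unfolding tent_def by auto

lemma tent_nonzero_unique:
  assumes "tent i a \<noteq> 0" "tent j a \<noteq> 0"
  shows "i = j"
proof -
  have "\<bar>a - real i\<bar> < 1/2" "\<bar>a - real j\<bar> < 1/2"
    using assms unfolding tent_def by (auto simp: max_def split: if_splits)
  then have "\<bar>real i - real j\<bar> < 1"
    by linarith
  then show ?thesis
    by linarith
qed

lemma transverse_bump_bounds: "0 \<le> transverse_bump n v" "transverse_bump n v \<le> 1"
  unfolding transverse_bump_def by (auto intro: prod_nonneg prod_le_1)

lemma transverse_bump_upd_0 [simp]: "transverse_bump n (v(0 := z)) = transverse_bump n v"
  unfolding transverse_bump_def by (intro prod.cong) auto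

lemma transverse_bump_eq_0: "i \<in> {1..<n} \<Longrightarrow> 1 \<le> \<bar>v i\<bar> \<Longrightarrow> transverse_bump n v = 0"
  unfolding transverse_bump_def by (rule prod_zero) (auto intro!: bexI[of _ i])

lemma transverse_bump_axis: "transverse_bump n (\<lambda>i. if i = 0 then c else 0) = 1"
  unfolding transverse_bump_def by (intro prod.neutral) auto

lemma abs_move_strength_le: "\<bar>tent j a * transverse_bump n v\<bar> \<le> 1/2"
proof -
  have "\<bar>tent j a\<bar> * \<bar>transverse_bump n v\<bar> \<le> 1/2 * 1"
    using tent_bounds transverse_bump_bounds by (intro mult_mono) auto
  then show ?thesis
    by (simp add: abs_mult)
qed

lemma slab_cases:
  obtains j where "j \<in> {1..k}" "\<bar>v 0 - 2 * real j\<bar> < 1"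
  | "\<forall>j\<in>{1..k}. 1 \<le> \<bar>v 0 - 2 * real j\<bar>"
  by (meson not_le)

lemma model_move_in_slab:
  assumes j: "j \<in> {1..k}" and u: "\<bar>v 0 - 2 * real j\<bar> < 1"
  shows "model_move n k e a v = v(0 := 2 * real j +
           hyperbolic_shift (clip_half (e * tent j a * transverse_bump n v)) (v 0 - 2 * real j))"
proof -
  let ?d = "\<lambda>i. shift_displacement (e * tent i a * transverse_bump n v) (v 0 - 2 * real i)"
  have "?d i = 0" if "i \<in> {1..k} - {j}" for i
  proof -
    have "1 \<le> \<bar>real i - real j\<bar>"
      using that by auto
    then show ?thesis
      using u by (intro shift_displacement_outside) linarith
  qed
  then have "(\<Sum>i\<in>{1..k}. ?d i) = ?d j"
    using j by (simp add: sum.remove sum.neutral)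
  moreover have "v 0 + ?d j = 2 * real j + ((v 0 - 2 * real j) + ?d j)"
    by simp
  ultimately show ?thesis
    unfolding model_move_def using u by (simp add: shift_displacement_inside)
qed

lemma model_move_off_slabs:
  assumes "\<forall>j\<in>{1..k}. 1 \<le> \<bar>v 0 - 2 * real j\<bar>"
  shows "model_move n k e a v = v"
  unfolding model_move_def using assms by (simp add: shift_displacement_outside)

lemma model_move_other [simp]: "i \<noteq> 0 \<Longrightarrow> model_move n k e a v i = v i"
  unfolding model_move_def by simp

lemma transverse_bump_model_move [simp]:
  "transverse_bump n (model_move n k e a v) = transverse_bump n v"
  unfolding model_move_def by simp

lemma model_move_stays_in_slab:
  assumes "j \<in> {1..k}" "\<bar>v 0 - 2 * real j\<bar> < 1"
  shows "\<bar>model_move n k e a v 0 - 2 * real j\<bar> < 1"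
  using model_move_in_slab[where v=v, OF assms]
    abs_hyperbolic_shift_less[OF assms(2) abs_clip_half_less]
  by simp

lemma model_move_twice_in_slab:
  assumes "j \<in> {1..k}" "\<bar>v 0 - 2 * real j\<bar> < 1"
  shows "model_move n k e a (model_move n k e' b v) = v(0 := 2 * real j +
           hyperbolic_shift (clip_half (e * tent j a * transverse_bump n v))
             (hyperbolic_shift (clip_half (e' * tent j b * transverse_bump n v)) (v 0 - 2 * real j)))"
  using model_move_in_slab[where v="model_move n k e' b v",
      OF assms(1) model_move_stays_in_slab[where v=v, OF assms]]
    model_move_in_slab[where v=v, OF assms]
  by simp

lemma model_move_commute:
  "model_move n k e a (model_move n k e' b v) = model_move n k e' b (model_move n k e a v)"
proof (cases rule: slab_cases[of k v])
  case (1 j)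
  then have "\<bar>v 0 - 2 * real j\<bar> \<le> 1"
    by simp
  then show ?thesis
    using hyperbolic_shift_commute[OF _ abs_clip_half_less abs_clip_half_less]
    by (simp add: model_move_twice_in_slab[where v=v, OF 1])
next
  case 2
  then show ?thesis
    by (simp add: model_move_off_slabs)
qed

lemma model_move_inverse: "model_move n k (- e) a (model_move n k e a v) = v"
proof (cases rule: slab_cases[of k v])
  case (1 j)
  then have "\<bar>v 0 - 2 * real j\<bar> \<le> 1"
    by simp
  then show ?thesis
    using hyperbolic_shift_inverse[OF _ abs_clip_half_less]
    by (simp add: model_move_twice_in_slab[where v=v, OF 1] clip_half_minus)
next
  case 2
  then show ?thesis
    by (simp add: model_move_off_slabs)
qed

lemma model_control_in_slab:
  assumes "j \<in> {1..k}" "\<bar>v 0 - 2 * real j\<bar> < 1"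
  shows "model_control n k v = 0"
proof -
  have "1 \<le> real j"
    using assms(1) by simp
  then have "1 \<le> \<bar>v 0 + 2\<bar>"
    using assms(2) by linarith
  then have "max 0 (1 - \<bar>v 0 + 2\<bar>) = 0"
    by simp
  then show ?thesis
    unfolding model_control_def by simp
qed

lemma model_control_model_move [simp]:
  "model_control n k (model_move n k e a v) = model_control n k v"
proof (cases rule: slab_cases[of k v])
  case (1 j)
  then show ?thesis
    using model_control_in_slab model_move_stays_in_slab[where v=v and n=n and e=e and a=a, OF 1]
    by metis
next
  case 2
  then show ?thesis
    by (simp add: model_move_off_slabs)
qed

lemma model_move_control_self: "model_move n k e (model_control n k v) v = v"
proof (cases rule: slab_cases[of k v])
  case (1 j)
  then have "model_control n k v = 0"
    by (rule model_control_in_slab)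
  then show ?thesis
    unfolding model_move_def by (simp add: tent_0)
next
  case 2
  then show ?thesis
    by (simp add: model_move_off_slabs)
qed

lemma model_move_eq_self_iff:
  "model_move n k 1 a v = v \<longleftrightarrow>
     (\<forall>j\<in>{1..k}. \<bar>v 0 - 2 * real j\<bar> < 1 \<longrightarrow> tent j a * transverse_bump n v = 0)"
proof (cases rule: slab_cases[of k v])
  case (1 j)
  have only_j: "\<bar>v 0 - 2 * real i\<bar> < 1 \<longleftrightarrow> i = j" for i
    using 1 by auto
  have "model_move n k 1 a v = v \<longleftrightarrow>
      hyperbolic_shift (tent j a * transverse_bump n v) (v 0 - 2 * real j) = v 0 - 2 * real j"
    using model_move_in_slab[where v=v and n=n and e=1 and a=a, OF 1]
      clip_half_eq[OF abs_move_strength_le]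
    by (auto simp: fun_eq_iff)
  also have "\<dots> \<longleftrightarrow> tent j a * transverse_bump n v = 0"
    using hyperbolic_shift_eq_self_iff[OF 1(2)] abs_move_strength_le[of j a n v] by simp
  finally show ?thesis
    using only_j 1 by auto
next
  case 2
  then show ?thesis
    by (auto simp: model_move_off_slabs not_less)
qed

definition coord_box :: "nat \<Rightarrow> real \<Rightarrow> (nat \<Rightarrow> real) set" where
  "coord_box n R = {v. (\<forall>i<n. \<bar>v i\<bar> \<le> R) \<and> (\<forall>i\<ge>n. v i = 0)}"

lemma coord_box_subset_Euclidean_space: "coord_box n R \<subseteq> topspace (Euclidean_space n)"
  unfolding coord_box_def topspace_Euclidean_space by auto

lemma compactin_coord_box: "compactin (Euclidean_space n) (coord_box n R)"
proof -
  let ?S = "\<lambda>i. if i < n then {-R..R} else {0::real}"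
  have "coord_box n R = PiE UNIV ?S"
  proof (intro set_eqI iffI)
    fix v assume "v \<in> coord_box n R"
    then have "v i \<in> ?S i" for i
      unfolding coord_box_def by (cases "i < n") (auto simp: abs_le_iff)
    then show "v \<in> PiE UNIV ?S"
      by (simp add: PiE_UNIV_domain)
  next
    fix v assume "v \<in> PiE UNIV ?S"
    then have "v i \<in> ?S i" for i
      by (simp add: PiE_UNIV_domain Pi_iff)
    then have "(\<forall>i<n. \<bar>v i\<bar> \<le> R) \<and> (\<forall>i\<ge>n. v i = 0)"
      by (metis abs_le_iff atLeastAtMost_iff minus_le_iff not_le singletonD)
    then show "v \<in> coord_box n R"
      unfolding coord_box_def by simp
  qed
  moreover have "compactin euclideanreal (?S i)" for i
    by (cases "i < n") auto
  ultimately have "compactin (powertop_real UNIV) (coord_box n R)"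
    by (simp add: compactin_PiE)
  then show ?thesis
    using coord_box_subset_Euclidean_space
    unfolding Euclidean_space_def compactin_subtopology topspace_Euclidean_space by auto
qed

lemma continuous_map_Euclidean_space_coordinate:
  assumes "continuous_map Z (Euclidean_space n) F"
  shows "continuous_map Z euclideanreal (\<lambda>z. F z i)"
proof -
  have "continuous_map (Euclidean_space n) euclideanreal (\<lambda>v. v i)"
    unfolding Euclidean_space_def
    by (rule continuous_map_from_subtopology[OF continuous_map_product_projection]) simp
  from continuous_map_compose[OF assms this] show ?thesis
    by (simp add: o_def)
qed

lemma continuous_map_transverse_bump:
  "continuous_map Z (Euclidean_space m) F \<Longrightarrow>
    continuous_map Z euclideanreal (\<lambda>z. transverse_bump n (F z))"
  unfolding transverse_bump_def
  by (intro continuous_intros continuous_map_Euclidean_space_coordinate) auto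

lemma continuous_map_tent [continuous_intros]:
  "continuous_map Z euclideanreal a \<Longrightarrow> continuous_map Z euclideanreal (\<lambda>z. tent j (a z))"
  unfolding tent_def by (intro continuous_intros) auto

lemma continuous_map_model_control:
  "continuous_map (Euclidean_space n) euclideanreal (model_control n k)"
proof -
  have id: "continuous_map (Euclidean_space n) (Euclidean_space n) (\<lambda>v. v)"
    by simp
  have "continuous_map (Euclidean_space n) euclideanreal
      (\<lambda>v. real k * max 0 (1 - \<bar>v 0 + 2\<bar>) * transverse_bump n v)"
    by (intro continuous_intros continuous_map_Euclidean_space_coordinate[OF id]
        continuous_map_transverse_bump[OF id]) auto
  then show ?thesis
    unfolding model_control_def[abs_def] .
qed

lemma model_move_in_Euclidean_space:
  "1 \<le> n \<Longrightarrow> v \<in> topspace (Euclidean_space n) \<Longrightarrow>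
    model_move n k e a v \<in> topspace (Euclidean_space n)"
  unfolding topspace_Euclidean_space model_move_def by auto

lemma continuous_map_model_move:
  assumes n: "1 \<le> n"
  shows "continuous_map (prod_topology euclideanreal (Euclidean_space n)) (Euclidean_space n)
           (\<lambda>z. model_move n k e (fst z) (snd z))"
proof -
  let ?Z = "prod_topology euclideanreal (Euclidean_space n)"
  have snd: "continuous_map ?Z (Euclidean_space n) snd"
    by (rule continuous_map_snd)
  have "continuous_map ?Z euclideanreal (\<lambda>z. model_move n k e (fst z) (snd z) i)" for i
  proof (cases "i = 0")
    case True
    have "continuous_map ?Z euclideanreal (\<lambda>z. snd z 0 + (\<Sum>j\<in>{1..k}.
        shift_displacement (e * tent j (fst z) * transverse_bump n (snd z)) (snd z 0 - 2 * real j)))"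
      by (intro continuous_intros continuous_map_Euclidean_space_coordinate[OF snd]
          continuous_map_transverse_bump[OF snd] continuous_map_fst) auto
    then show ?thesis
      using True unfolding model_move_def by simp
  next
    case False
    then show ?thesis
      using continuous_map_Euclidean_space_coordinate[OF snd, of i] by simp
  qed
  then have "continuous_map ?Z (powertop_real UNIV) (\<lambda>z. model_move n k e (fst z) (snd z))"
    unfolding continuous_map_componentwise_UNIV by simp
  moreover have "(\<lambda>z. model_move n k e (fst z) (snd z)) \<in> topspace ?Z \<rightarrow> {x. \<forall>i\<ge>n. x i = 0}"
    using model_move_in_Euclidean_space[OF n] by (force simp: topspace_Euclidean_space)
  ultimately show ?thesis
    unfolding Euclidean_space_def continuous_map_in_subtopology by simp
qed

lemma model_move_coord_box:
  assumes n: "1 \<le> n" and v: "v \<in> coord_box n (2 * real k + 2)"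
  shows "model_move n k e a v \<in> coord_box n (2 * real k + 2)"
proof (cases rule: slab_cases[of k v])
  case (1 j)
  have "\<bar>model_move n k e a v 0 - 2 * real j\<bar> < 1"
    using model_move_stays_in_slab[where v=v, OF 1] .
  moreover have "real j \<le> real k"
    using 1 by simp
  ultimately have bound_0: "\<bar>model_move n k e a v 0\<bar> \<le> 2 * real k + 2"
    by linarith
  have "\<bar>model_move n k e a v i\<bar> \<le> 2 * real k + 2" if "i < n" for i
    using bound_0 v that by (cases "i = 0") (simp_all add: coord_box_def)
  moreover have "model_move n k e a v i = 0" if "n \<le> i" for i
    using v n that by (simp add: coord_box_def)
  ultimately show ?thesis
    unfolding coord_box_def by simp
next
  case 2
  then show ?thesis
    using v by (simp add: model_move_off_slabs)
qed

lemma model_move_outside_coord_box: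
  assumes k: "1 \<le> k" and v: "v \<in> topspace (Euclidean_space n)"
    and outside: "v \<notin> coord_box n (2 * real k + 2)"
  shows "model_move n k e a v = v \<and> model_control n k v = 0"
proof -
  obtain i where i: "i < n" "2 * real k + 2 < \<bar>v i\<bar>"
    using v outside unfolding coord_box_def topspace_Euclidean_space by force
  have "1 \<le> real k"
    using k by simp
  show ?thesis
  proof (cases "i = 0")
    case True
    have "\<forall>j\<in>{1..k}. 1 \<le> \<bar>v 0 - 2 * real j\<bar>"
    proof
      fix j assume "j \<in> {1..k}"
      then have "real j \<le> real k"
        by simp
      then show "1 \<le> \<bar>v 0 - 2 * real j\<bar>"
        using i(2) unfolding True by linarith
    qed
    moreover have "max 0 (1 - \<bar>v 0 + 2\<bar>) = 0"
      using i(2) \<open>1 \<le> real k\<close> unfolding True by simp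
    ultimately show ?thesis
      by (simp add: model_move_off_slabs model_control_def)
  next
    case False
    then have "transverse_bump n v = 0"
      using i \<open>1 \<le> real k\<close> by (intro transverse_bump_eq_0[of i]) auto
    then show ?thesis
      unfolding model_move_def model_control_def by simp
  qed
qed

section \<open>Transplanting the model into a chart\<close>

lemma continuous_map_if_outside_closed:
  assumes U: "openin X U" and C: "closedin X C" "C \<subseteq> U"
    and f: "continuous_map (subtopology X U) Y f" and g: "continuous_map X Y g"
    and eq: "\<And>x. x \<in> U \<Longrightarrow> x \<notin> C \<Longrightarrow> f x = g x"
  shows "continuous_map X Y (\<lambda>x. if x \<in> U then f x else g x)"
proof (rule pasting_lemma[where I="{True, False}" and T="\<lambda>b. if b then U else topspace X - C"
      and f="\<lambda>b. if b then f else g"])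
  show "openin X (if b then U else topspace X - C)" for b
    using U C by auto
  show "continuous_map (subtopology X (if b then U else topspace X - C)) Y (if b then f else g)" for b
    using f g by (auto intro: continuous_map_from_subtopology)
  show "(if i then f else g) x = (if j then f else g) x"
    if "x \<in> topspace X \<inter> (if i then U else topspace X - C) \<inter> (if j then U else topspace X - C)" for i j x
    using that eq by (cases i; cases j) auto
  show "\<exists>j. j \<in> {True, False} \<and> x \<in> (if j then U else topspace X - C) \<and>
      (if x \<in> U then f x else g x) = (if j then f else g) x" if "x \<in> topspace X" for x
    using that C by (cases "x \<in> U") auto
qed

(* The cube contains all slabs and the support of model_control, so move and control can be
   extended by the identity and by 0 outside the chart: they are already trivial outside the
   compact set core. *)
locale box_chart =
  fixes X :: "'a topology" and U :: "'a set" and V :: "(nat \<Rightarrow> real) set"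
    and h :: "'a \<Rightarrow> nat \<Rightarrow> real" and g :: "(nat \<Rightarrow> real) \<Rightarrow> 'a" and n k :: nat
  assumes homeomorphic: "homeomorphic_maps (subtopology X U) (subtopology (Euclidean_space n) V) h g"
    and open_U: "openin X U" and V_subset: "V \<subseteq> topspace (Euclidean_space n)"
    and Hausdorff: "Hausdorff_space X" and n: "1 \<le> n" and k: "1 \<le> k"
    and box: "coord_box n (2 * real k + 2) \<subseteq> V"
begin

definition control :: "'a \<Rightarrow> real" where
  "control y = (if y \<in> U then model_control n k (h y) else 0)"

definition move :: "real \<Rightarrow> real \<Rightarrow> 'a \<Rightarrow> 'a" where
  "move e a x = (if x \<in> U then g (model_move n k e a (h x)) else x)"

definition core :: "'a set" where
  "core = g ` coord_box n (2 * real k + 2)"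

definition quandle_op :: "'a \<Rightarrow> 'a \<Rightarrow> 'a" where
  "quandle_op x y = move 1 (control y) x"

definition slab_region :: "nat \<Rightarrow> 'a set" where
  "slab_region j = {x \<in> U. \<bar>h x 0 - 2 * real j\<bar> < 1 \<and> transverse_bump n (h x) \<noteq> 0}"

lemma U_subset: "U \<subseteq> topspace X"
  using open_U by (rule openin_subset)

lemma continuous_map_h: "continuous_map (subtopology X U) (subtopology (Euclidean_space n) V) h"
  and continuous_map_g: "continuous_map (subtopology (Euclidean_space n) V) (subtopology X U) g"
  using homeomorphic unfolding homeomorphic_maps_def by auto

lemma h_in_V: "x \<in> U \<Longrightarrow> h x \<in> V"
  using continuous_map_h U_subset V_subset unfolding continuous_map_def by auto

lemma g_in_U: "w \<in> V \<Longrightarrow> g w \<in> U"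
  using continuous_map_g V_subset unfolding continuous_map_def by auto

lemma g_h: "x \<in> U \<Longrightarrow> g (h x) = x"
  using homeomorphic U_subset unfolding homeomorphic_maps_def by auto

lemma h_g: "w \<in> V \<Longrightarrow> h (g w) = w"
  using homeomorphic V_subset unfolding homeomorphic_maps_def by auto

lemma model_move_in_V:
  assumes "w \<in> V"
  shows "model_move n k e a w \<in> V"
proof (cases "w \<in> coord_box n (2 * real k + 2)")
  case True
  then show ?thesis
    by (rule subsetD[OF box model_move_coord_box[OF n]])
next
  case False
  have "w \<in> topspace (Euclidean_space n)"
    using assms V_subset by blast
  then show ?thesis
    using model_move_outside_coord_box[OF k _ False] assms by simp
qed

lemma move_outside_U: "x \<notin> U \<Longrightarrow> move e a x = x"
  unfolding move_def by simp

lemma move_in_U: "x \<in> U \<Longrightarrow> move e a x \<in> U"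
  unfolding move_def using g_in_U model_move_in_V h_in_V by simp

lemma h_move: "x \<in> U \<Longrightarrow> h (move e a x) = model_move n k e a (h x)"
  unfolding move_def using h_g model_move_in_V h_in_V by simp

lemma core_subset: "core \<subseteq> U"
  unfolding core_def using box g_in_U by auto

lemma closedin_core: "closedin X core"
proof -
  have "compactin (subtopology (Euclidean_space n) V) (coord_box n (2 * real k + 2))"
    using compactin_coord_box box by (simp add: compactin_subtopology)
  then have "compactin (subtopology X U) core"
    unfolding core_def using continuous_map_g by (rule image_compactin)
  then show ?thesis
    using Hausdorff compactin_imp_closedin compactin_subtopology by blast
qed

lemma outside_core:
  assumes "x \<in> U" "x \<notin> core"
  shows "model_move n k e a (h x) = h x" "model_control n k (h x) = 0"
proof -
  have "h x \<notin> coord_box n (2 * real k + 2)"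
    using assms g_h unfolding core_def by (metis image_eqI)
  moreover have "h x \<in> topspace (Euclidean_space n)"
    using h_in_V assms(1) V_subset by auto
  ultimately show "model_move n k e a (h x) = h x" "model_control n k (h x) = 0"
    using model_move_outside_coord_box[OF k] by blast+
qed

lemma continuous_map_control: "continuous_map X euclideanreal control"
proof -
  have "continuous_map (subtopology X U) euclideanreal (\<lambda>y. model_control n k (h y))"
    using continuous_map_compose[OF continuous_map_into_fulltopology[OF continuous_map_h]
        continuous_map_model_control] by (simp add: o_def)
  then have "continuous_map X euclideanreal (\<lambda>y. if y \<in> U then model_control n k (h y) else 0)"
    using open_U closedin_core core_subset outside_core(2)
    by (intro continuous_map_if_outside_closed) auto
  then show ?thesis
    unfolding control_def[abs_def] .
qed

lemma continuous_map_model_move_V: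
  "continuous_map (prod_topology euclideanreal (subtopology (Euclidean_space n) V))
     (subtopology (Euclidean_space n) V) (\<lambda>z. model_move n k e (fst z) (snd z))"
proof -
  have "continuous_map (prod_topology euclideanreal (subtopology (Euclidean_space n) V))
      (Euclidean_space n) (\<lambda>z. model_move n k e (fst z) (snd z))"
    unfolding prod_topology_subtopology
    by (rule continuous_map_from_subtopology[OF continuous_map_model_move[OF n]])
  then show ?thesis
    using model_move_in_V by (auto simp: continuous_map_in_subtopology)
qed

lemma continuous_map_move: "continuous_map (prod_topology X X) X (\<lambda>(x, y). move e (control y) x)"
proof -
  let ?Z = "subtopology (prod_topology X X) (U \<times> topspace X)"
  have "continuous_map ?Z euclideanreal (\<lambda>z. control (snd z))"
    using continuous_map_compose[OF continuous_map_subtopology_snd continuous_map_control]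
    by (simp add: o_def)
  moreover have "continuous_map ?Z (subtopology X U) fst"
    by (auto simp: continuous_map_in_subtopology continuous_map_subtopology_fst)
  then have "continuous_map ?Z (subtopology (Euclidean_space n) V) (\<lambda>z. h (fst z))"
    using continuous_map_compose[OF _ continuous_map_h] by (simp add: o_def)
  ultimately have "continuous_map ?Z (prod_topology euclideanreal (subtopology (Euclidean_space n) V))
      (\<lambda>z. (control (snd z), h (fst z)))"
    by (intro continuous_map_pairedI)
  from continuous_map_compose[OF continuous_map_compose[OF this continuous_map_model_move_V]
      continuous_map_into_fulltopology[OF continuous_map_g]]
  have "continuous_map ?Z X (\<lambda>z. g (model_move n k e (control (snd z)) (h (fst z))))"
    by (simp add: o_def)
  moreover have "openin (prod_topology X X) (U \<times> topspace X)"
    using open_U by (simp add: openin_prod_Times_iff)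
  moreover have "closedin (prod_topology X X) (core \<times> topspace X)"
    using closedin_core by (simp add: closedin_prod_Times_iff)
  moreover have "g (model_move n k e (control (snd z)) (h (fst z))) = fst z"
    if "z \<in> U \<times> topspace X" "z \<notin> core \<times> topspace X" for z
  proof -
    have "fst z \<in> U" "fst z \<notin> core"
      using that by auto
    then show ?thesis
      by (simp add: outside_core(1) g_h)
  qed
  ultimately have "continuous_map (prod_topology X X) X
      (\<lambda>z. if z \<in> U \<times> topspace X then g (model_move n k e (control (snd z)) (h (fst z))) else fst z)"
    using core_subset by (intro continuous_map_if_outside_closed) (auto simp: continuous_map_fst)
  then show ?thesis
    by (rule continuous_map_eq) (auto simp: move_def split: if_splits)
qed

lemma move_move:
  assumes "x \<in> U"
  shows "move e a (move e' b x) = g (model_move n k e a (model_move n k e' b (h x)))"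
  using assms move_in_U h_move unfolding move_def[of e] by simp

lemma move_inverse: "move (- e) a (move e a x) = x"
  by (cases "x \<in> U") (simp_all add: move_move model_move_inverse g_h move_outside_U)

lemma homeomorphic_map_move:
  assumes "y \<in> topspace X"
  shows "homeomorphic_map X X (move e (control y))"
proof -
  have "continuous_map X X (\<lambda>x. move e (control y) x)" for e
  proof -
    have "continuous_map X (prod_topology X X) (\<lambda>x. (x, y))"
      using assms by (intro continuous_map_pairedI) auto
    from continuous_map_compose[OF this continuous_map_move[of e]] show ?thesis
      by (simp add: o_def)
  qed
  then have "homeomorphic_maps X X (move e (control y)) (move (- e) (control y))"
    unfolding homeomorphic_maps_def using move_inverse[of e] move_inverse[of "- e"] by auto
  then show ?thesis
    by (rule homeomorphic_maps_imp_map)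
qed

lemma move_commute: "move e a (move e' b x) = move e' b (move e a x)"
  by (cases "x \<in> U") (simp_all add: move_move model_move_commute move_outside_U)

lemma control_move: "control (move e a x) = control x"
  by (cases "x \<in> U") (simp_all add: control_def move_in_U h_move move_outside_U)

lemma move_control_self: "move e (control x) x = x"
  unfolding move_def control_def by (simp add: model_move_control_self g_h)

lemma topological_quandle_quandle_op: "topological_quandle X quandle_op"
  unfolding quandle_op_def[abs_def]
  using continuous_map_move homeomorphic_map_move move_commute control_move move_control_self
  by (rule topological_quandle_commuting_family)

lemma move_eq_self_iff:
  "move 1 a x = x \<longleftrightarrow> (\<forall>j\<in>{1..k}. tent j a \<noteq> 0 \<longrightarrow> x \<notin> slab_region j)"
proof (cases "x \<in> U")
  case True
  have "move 1 a x = x \<longleftrightarrow> h (move 1 a x) = h x"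
    using True move_in_U g_h by metis
  also have "\<dots> \<longleftrightarrow> model_move n k 1 a (h x) = h x"
    by (simp add: h_move[OF True])
  also have "\<dots> \<longleftrightarrow> (\<forall>j\<in>{1..k}. \<bar>h x 0 - 2 * real j\<bar> < 1 \<longrightarrow> tent j a * transverse_bump n (h x) = 0)"
    by (rule model_move_eq_self_iff)
  also have "\<dots> \<longleftrightarrow> (\<forall>j\<in>{1..k}. tent j a \<noteq> 0 \<longrightarrow> x \<notin> slab_region j)"
    unfolding slab_region_def using True by auto
  finally show ?thesis .
next
  case False
  then show ?thesis
    unfolding move_def slab_region_def by simp
qed

lemma right_fixed_set_quandle_op_all:
  "(\<forall>j\<in>{1..k}. tent j (control y) = 0) \<Longrightarrow> right_fixed_set X quandle_op y = topspace X"
  unfolding right_fixed_set_def quandle_op_def using move_eq_self_iff by auto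

lemma right_fixed_set_quandle_op_slab:
  assumes "j \<in> {1..k}" "tent j (control y) \<noteq> 0"
  shows "right_fixed_set X quandle_op y = topspace X - slab_region j"
  unfolding right_fixed_set_def quandle_op_def move_eq_self_iff
  using assms by (auto dest: tent_nonzero_unique[OF _ assms(2)])

lemma axis_point:
  assumes "\<bar>c\<bar> \<le> 2 * real k + 2"
  shows "g (\<lambda>i. if i = 0 then c else 0) \<in> U"
    and "h (g (\<lambda>i. if i = 0 then c else 0)) = (\<lambda>i. if i = 0 then c else 0)"
proof -
  have "(\<lambda>i. if i = 0 then c else 0) \<in> V"
    using assms n box unfolding coord_box_def by auto
  then show "g (\<lambda>i. if i = 0 then c else 0) \<in> U"
    and "h (g (\<lambda>i. if i = 0 then c else 0)) = (\<lambda>i. if i = 0 then c else 0)"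
    using g_in_U h_g by auto
qed

lemma slab_region_subset: "slab_region j \<subseteq> topspace X"
  unfolding slab_region_def using U_subset by auto

lemma axis_point_in_slab_region:
  assumes "j \<in> {1..k}"
  shows "g (\<lambda>i. if i = 0 then 2 * real j else 0) \<in> slab_region j"
proof -
  have "\<bar>2 * real j\<bar> \<le> 2 * real k + 2"
    using assms by auto
  then show ?thesis
    using axis_point unfolding slab_region_def by (simp add: transverse_bump_axis)
qed

lemma slab_region_disjoint: "x \<in> slab_region i \<Longrightarrow> x \<in> slab_region j \<Longrightarrow> i = j"
proof -
  assume "x \<in> slab_region i" "x \<in> slab_region j"
  then have "\<bar>h x 0 - 2 * real i\<bar> < 1" "\<bar>h x 0 - 2 * real j\<bar> < 1"
    unfolding slab_region_def by auto
  then have "\<bar>real i - real j\<bar> < 1"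
    by linarith
  then show "i = j"
    by linarith
qed

lemma control_attains:
  assumes "j \<in> {0..k}"
  shows "\<exists>y\<in>topspace X. control y = real j"
proof -
  let ?c = "- 1 - real j / real k"
  have ratio: "0 \<le> real j / real k" "real j / real k \<le> 1"
    using assms k by auto
  moreover have "1 \<le> real k"
    using k by simp
  ultimately have "\<bar>?c\<bar> \<le> 2 * real k + 2"
    by linarith
  moreover have "\<bar>?c + 2\<bar> = 1 - real j / real k"
    using ratio by simp
  ultimately have "control (g (\<lambda>i. if i = 0 then ?c else 0)) = real j"
    unfolding control_def model_control_def using axis_point k by (simp add: transverse_bump_axis)
  moreover have "g (\<lambda>i. if i = 0 then ?c else 0) \<in> topspace X"
    using axis_point(1)[OF \<open>\<bar>?c\<bar> \<le> 2 * real k + 2\<close>] U_subset by blast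
  ultimately show ?thesis
    by blast
qed

lemma right_fixed_sets_quandle_op:
  "right_fixed_sets X quandle_op = insert (topspace X) ((\<lambda>j. topspace X - slab_region j) ` {1..k})"
proof (intro equalityI subsetI)
  fix A assume "A \<in> right_fixed_sets X quandle_op"
  then obtain y where "A = right_fixed_set X quandle_op y"
    unfolding right_fixed_sets_def by auto
  then show "A \<in> insert (topspace X) ((\<lambda>j. topspace X - slab_region j) ` {1..k})"
    using right_fixed_set_quandle_op_all right_fixed_set_quandle_op_slab by blast
next
  fix A assume "A \<in> insert (topspace X) ((\<lambda>j. topspace X - slab_region j) ` {1..k})"
  then consider "A = topspace X" | j where "j \<in> {1..k}" "A = topspace X - slab_region j"
    by blast
  then show "A \<in> right_fixed_sets X quandle_op"
  proof cases
    case 1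
    obtain y where "y \<in> topspace X" "control y = 0"
      using control_attains[of 0] by auto
    then show ?thesis
      using 1 right_fixed_set_quandle_op_all[of y] tent_0
      unfolding right_fixed_sets_def by (metis atLeastAtMost_iff image_eqI)
  next
    case (2 j)
    obtain y where "y \<in> topspace X" "control y = real j"
      using control_attains[of j] 2 by auto
    moreover have "tent j (real j) \<noteq> 0"
      unfolding tent_def by simp
    ultimately show ?thesis
      using 2 right_fixed_set_quandle_op_slab[of j y]
      unfolding right_fixed_sets_def by (metis image_eqI)
  qed
qed

lemma card_right_fixed_sets_quandle_op: "card (right_fixed_sets X quandle_op) = Suc k"
proof -
  have "inj_on (\<lambda>j. topspace X - slab_region j) {1..k}"
  proof (rule inj_onI)
    fix i j assume i: "i \<in> {1..k}" and "j \<in> {1..k}"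
      and "topspace X - slab_region i = topspace X - slab_region j"
    then have "slab_region i = slab_region j"
      using slab_region_subset by blast
    then show "i = j"
      using axis_point_in_slab_region[OF i] slab_region_disjoint by blast
  qed
  moreover have "topspace X \<notin> (\<lambda>j. topspace X - slab_region j) ` {1..k}"
    using axis_point_in_slab_region slab_region_subset by blast
  ultimately show ?thesis
    unfolding right_fixed_sets_quandle_op by (simp add: card_image)
qed

end

section \<open>Charts containing a large cube\<close>

lemma openin_Euclidean_space_cube:
  assumes V: "openin (Euclidean_space n) V" and c: "c \<in> V"
  obtains d where "0 < d"
    "\<And>v. v \<in> topspace (Euclidean_space n) \<Longrightarrow> \<forall>i<n. \<bar>v i - c i\<bar> < d \<Longrightarrow> v \<in> V"
proof -
  obtain W where W: "openin (powertop_real UNIV) W" "V = W \<inter> {x. \<forall>i\<ge>n. x i = 0}"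
    using V unfolding Euclidean_space_def openin_subtopology by blast
  then have "c \<in> W" "\<forall>i\<ge>n. c i = 0"
    using c by auto
  then obtain S where S: "c \<in> PiE UNIV S" "\<And>i. open (S i)" "PiE UNIV S \<subseteq> W"
    using product_topology_open_contains_basis[OF W(1) \<open>c \<in> W\<close>] by auto
  have "\<forall>\<^sub>F d in at_right 0. \<forall>y. \<bar>y - c i\<bar> < d \<longrightarrow> y \<in> S i" for i
  proof -
    have "c i \<in> S i"
      using S(1) by (simp add: PiE_UNIV_domain Pi_iff)
    then obtain e where "0 < e" "\<forall>y. dist y (c i) < e \<longrightarrow> y \<in> S i"
      using S(2)[of i] unfolding open_dist by blast
    then show ?thesis
      unfolding eventually_at_right_field dist_real_def by (intro exI[of _ e]) auto
  qed
  then have "\<forall>\<^sub>F d in at_right 0. \<forall>i\<in>{..<n}. \<forall>y. \<bar>y - c i\<bar> < d \<longrightarrow> y \<in> S i"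
    by (intro eventually_ball_finite) auto
  then obtain d where d: "0 < d" "\<forall>i<n. \<forall>y. \<bar>y - c i\<bar> < d \<longrightarrow> y \<in> S i"
    unfolding eventually_at_right_field by (metis field_lbound_gt_zero lessThan_iff)
  show ?thesis
  proof (rule that[OF d(1)])
    fix v assume v: "v \<in> topspace (Euclidean_space n)" "\<forall>i<n. \<bar>v i - c i\<bar> < d"
    have "v i \<in> S i" for i
    proof (cases "i < n")
      case True
      then show ?thesis
        using d v by blast
    next
      case False
      then have "v i = c i"
        using v \<open>\<forall>i\<ge>n. c i = 0\<close> unfolding topspace_Euclidean_space by auto
      then show ?thesis
        using S(1) by (auto simp: PiE_UNIV_domain)
    qed
    then show "v \<in> V"
      using S(3) W(2) v(1) unfolding topspace_Euclidean_space by (auto simp: PiE_UNIV_domain)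
  qed
qed

lemma continuous_map_Euclidean_space_affine:
  assumes "\<And>i. n \<le> i \<Longrightarrow> c i = 0" "\<And>i. n \<le> i \<Longrightarrow> b i = 0"
  shows "continuous_map (Euclidean_space n) (Euclidean_space n) (\<lambda>v i. (v i - c i) * s + b i)"
proof -
  have id: "continuous_map (Euclidean_space n) (Euclidean_space n) (\<lambda>v. v)"
    by simp
  have "continuous_map (Euclidean_space n) euclideanreal (\<lambda>v. (v i - c i) * s + b i)" for i
    using continuous_map_Euclidean_space_coordinate[OF id, of i] by (intro continuous_intros) auto
  then have "continuous_map (Euclidean_space n) (powertop_real UNIV) (\<lambda>v i. (v i - c i) * s + b i)"
    unfolding continuous_map_componentwise_UNIV by simp
  moreover have "(\<lambda>v i. (v i - c i) * s + b i) \<in> topspace (Euclidean_space n) \<rightarrow> {x. \<forall>i\<ge>n. x i = 0}"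
    using assms unfolding topspace_Euclidean_space by auto
  ultimately show ?thesis
    unfolding Euclidean_space_def continuous_map_in_subtopology by simp
qed

lemma homeomorphic_maps_Euclidean_space_rescale:
  assumes c: "\<And>i. n \<le> i \<Longrightarrow> c i = 0" and s: "s \<noteq> 0"
  shows "homeomorphic_maps (Euclidean_space n) (Euclidean_space n)
           (\<lambda>v i. (v i - c i) * s) (\<lambda>w i. w i / s + c i)"
proof -
  have "continuous_map (Euclidean_space n) (Euclidean_space n) (\<lambda>v i. (v i - c i) * s)"
    using continuous_map_Euclidean_space_affine[of n c "\<lambda>i. 0" s] c by simp
  moreover have "continuous_map (Euclidean_space n) (Euclidean_space n) (\<lambda>w i. w i / s + c i)"
    using continuous_map_Euclidean_space_affine[of n "\<lambda>i. 0" c "1 / s"] c by simp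
  ultimately show ?thesis
    unfolding homeomorphic_maps_def using s by simp
qed

lemma coord_box_subset_rescaled_cube:
  assumes d: "0 < d" and cube: "\<And>v. v \<in> topspace (Euclidean_space n) \<Longrightarrow> \<forall>i<n. \<bar>v i - c i\<bar> < d \<Longrightarrow> v \<in> V"
    and c: "\<And>i. n \<le> i \<Longrightarrow> c i = 0" and R: "0 < R"
  shows "coord_box n R \<subseteq> (\<lambda>v i. (v i - c i) * (2 * R / d)) ` V"
proof
  fix w assume w: "w \<in> coord_box n R"
  define s where "s = 2 * R / d"
  have s: "0 < s"
    using R d unfolding s_def by simp
  have "(\<lambda>i. w i / s + c i) \<in> topspace (Euclidean_space n)"
    using w c unfolding coord_box_def topspace_Euclidean_space by simp
  moreover have "\<bar>w i / s + c i - c i\<bar> < d" if "i < n" for i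
  proof -
    have "\<bar>w i / s + c i - c i\<bar> = \<bar>w i\<bar> / s"
      using s by (simp add: abs_div)
    also have "\<dots> \<le> R / s"
      using w that s unfolding coord_box_def by (simp add: divide_right_mono)
    also have "\<dots> = d / 2"
      unfolding s_def using R d by simp
    also have "\<dots> < d"
      using d by simp
    finally show ?thesis .
  qed
  ultimately have "(\<lambda>i. w i / s + c i) \<in> V"
    using cube by blast
  moreover have "w = (\<lambda>v i. (v i - c i) * s) (\<lambda>i. w i / s + c i)"
    using s by auto
  ultimately have "w \<in> (\<lambda>v i. (v i - c i) * s) ` V"
    by (simp only: image_eqI)
  then show "w \<in> (\<lambda>v i. (v i - c i) * (2 * R / d)) ` V"
    unfolding s_def .
qed

lemma chart_containing_coord_box:
  assumes manifold: "topological_manifold X n" and x: "x \<in> topspace X" and R: "0 < R"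
  obtains U V h g where "openin X U" "V \<subseteq> topspace (Euclidean_space n)" "coord_box n R \<subseteq> V"
    "homeomorphic_maps (subtopology X U) (subtopology (Euclidean_space n) V) h g"
proof -
  let ?E = "Euclidean_space n"
  obtain U V0 where U: "openin X U" "x \<in> U" and V0: "openin ?E V0"
    and "subtopology X U homeomorphic_space subtopology ?E V0"
    using manifold x unfolding topological_manifold_def by blast
  then obtain h g where hg: "homeomorphic_maps (subtopology X U) (subtopology ?E V0) h g"
    unfolding homeomorphic_space_def by blast
  have V0_subset: "V0 \<subseteq> topspace ?E"
    using V0 by (rule openin_subset)
  have "h x \<in> V0"
    using hg U openin_subset[OF U(1)] unfolding homeomorphic_maps_def continuous_map_def by auto
  then have c: "h x i = 0" if "n \<le> i" for i
    using that V0_subset unfolding topspace_Euclidean_space by auto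
  obtain d where d: "0 < d" "\<And>v. v \<in> topspace ?E \<Longrightarrow> \<forall>i<n. \<bar>v i - h x i\<bar> < d \<Longrightarrow> v \<in> V0"
    using openin_Euclidean_space_cube[OF V0 \<open>h x \<in> V0\<close>] by blast
  define A where "A = (\<lambda>v i. (v i - h x i) * (2 * R / d))"
  define B where "B = (\<lambda>w i. w i / (2 * R / d) + h x i)"
  have AB: "homeomorphic_maps ?E ?E A B"
    unfolding A_def B_def using R d c by (intro homeomorphic_maps_Euclidean_space_rescale) auto
  have A_V0: "A ` V0 \<subseteq> topspace ?E"
    using AB V0_subset unfolding homeomorphic_maps_def continuous_map_def by auto
  have "homeomorphic_maps (subtopology ?E V0) (subtopology ?E (A ` V0)) A B"
    using AB V0_subset A_V0 by (intro homeomorphic_maps_subtopologies) auto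
  then have "homeomorphic_maps (subtopology X U) (subtopology ?E (A ` V0)) (A \<circ> h) (g \<circ> B)"
    using hg homeomorphic_maps_compose by blast
  moreover have "coord_box n R \<subseteq> A ` V0"
    unfolding A_def using coord_box_subset_rescaled_cube[OF d c R] .
  ultimately show ?thesis
    using that U(1) A_V0 by blast
qed

lemma exists_quandle_card_right_fixed_sets:
  assumes manifold: "topological_manifold X n" and n: "1 \<le> n" and nonempty: "topspace X \<noteq> {}"
    and k: "1 \<le> k"
  shows "\<exists>f. topological_quandle X f \<and> card (right_fixed_sets X f) = Suc k"
proof -
  obtain x where x: "x \<in> topspace X"
    using nonempty by blast
  have "0 < 2 * real k + 2"
    by simp
  then obtain U V h g where "openin X U" "V \<subseteq> topspace (Euclidean_space n)"
    "coord_box n (2 * real k + 2) \<subseteq> V"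
    "homeomorphic_maps (subtopology X U) (subtopology (Euclidean_space n) V) h g"
    by (rule chart_containing_coord_box[OF manifold x])
  moreover have "Hausdorff_space X"
    using manifold unfolding topological_manifold_def by blast
  ultimately interpret box_chart X U V h g n k
    using n k by unfold_locales
  show ?thesis
    using topological_quandle_quandle_op card_right_fixed_sets_quandle_op by blast
qed

theorem mainTheorem3:
  fixes X :: "'a topology" and n :: nat
  assumes "topological_manifold X n" and "n \<ge> 1" and "topspace X \<noteq> {}"
  shows "\<exists>Q. infinite Q \<and>
           (\<forall>f\<in>Q. topological_quandle X f \<and> \<not> trivial_quandle X f) \<and>
           (\<forall>f\<in>Q. \<forall>g\<in>Q. f \<noteq> g \<longrightarrow> \<not> quandle_isomorphic X f g)"
  using exists_quandle_card_right_fixed_sets[OF assms]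
  by (rule infinitely_many_nonisomorphic_quandles)

end
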